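(* Let $\Gamma$ be the first Grigorchuk group with generators $a,b,c,d$, acting on the right on $\{0,1\}^{\mathbb N}$, and let $\rho=111\cdots$. For a word $w=w_1\cdots w_n$ over $\{a,b,c,d\}$ let $\mathcal O(w)=\{\rho\,w_{i+1}\cdots w_n: i=0,\dots,n\}$, and set $\Sigma(n)=\#\{\mathcal O(w): w\text{ a word over }\{a,b,c,d\},\ |w|\le n\}$. Let $\eta$ be the real root of $t^3+t^2+t-2$ and $\alpha=\log 2/\log(2/\eta)$. Then $\Sigma(n)\preceq\exp(n^\alpha)$.
   Context: The first Grigorchuk group $\Gamma$ is the group of permutations of $\{0,1\}^{\mathbb N}$ (acting on the right) generated by $a,b,c,d$, defined recursively for $x\in\{0,1\}$ and infinite binary sequences $u$ by: $(xu)a=(1-x)u$; $(0u)b=0(ua)$, $(1u)b=1(uc)$; $(0u)c=0(ua)$, $(1u)c=1(ud)$; $(0u)d=0u$, $(1u)d=1(ub)$. For functions $f,g:\mathbb N\to\mathbb R_+$, $g\preceq f$ means there is $C>0$ with $g(n)\le f(Cn)$ for all sufficiently large $n$. *)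

theory Defs
  imports Complex_Main
begin

text \<open>Binary sequences: nat \<Rightarrow> bool, with True encoding the letter 1, False the letter 0.\<close>

datatype gen = GA | GB | GC | GD

fun gact :: "gen \<Rightarrow> (nat \<Rightarrow> bool) \<Rightarrow> nat \<Rightarrow> bool" where
  "gact GA u 0 = (\<not> u 0)"
| "gact GA u (Suc k) = u (Suc k)"
| "gact GB u 0 = u 0"
| "gact GB u (Suc k) = (if \<not> u 0 then gact GA (\<lambda>j. u (Suc j)) k else gact GC (\<lambda>j. u (Suc j)) k)"
| "gact GC u 0 = u 0"
| "gact GC u (Suc k) = (if \<not> u 0 then gact GA (\<lambda>j. u (Suc j)) k else gact GD (\<lambda>j. u (Suc j)) k)"
| "gact GD u 0 = u 0"
| "gact GD u (Suc k) = (if \<not> u 0 then u (Suc k) else gact GB (\<lambda>j. u (Suc j)) k)"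

definition act_word :: "(nat \<Rightarrow> bool) \<Rightarrow> gen list \<Rightarrow> (nat \<Rightarrow> bool)" where
  "act_word u w = foldl (\<lambda>v g. gact g v) u w"

definition rho :: "nat \<Rightarrow> bool" where
  "rho = (\<lambda>_. True)"

definition orbit_set :: "gen list \<Rightarrow> (nat \<Rightarrow> bool) set" where
  "orbit_set w = {act_word rho (drop i w) | i. i \<le> length w}"

definition Sigma_count :: "nat \<Rightarrow> nat" where
  "Sigma_count n = card {orbit_set w | w. length w \<le> n}"

definition eta :: real where
  "eta = (THE t::real. t ^ 3 + t ^ 2 + t - 2 = 0)"

definition alpha :: real where
  "alpha = ln 2 / ln (2 / eta)"

end

theory Submission
  imports Defs
begin

text \<open>
  Write a word as w = v0 a v1 a ... a vm with each vi in the Klein four-group {1, b, c, d}.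
  Since rho is fixed by b, c, d, the orbit O(w) depends only on the syllables v1, ..., vm.
  An orbit point consists of its first letter and a tail, and the tails are orbit points of
  the two sections of w. So O(w) is determined by the parity of m, whether rho occurs among
  the tails of either parity, and the orbits of the two sections. For Bartholdi's weights
  |a| = 1 - eta^3, |b| = eta^3, |c| = 1 - eta^2, |d| = 1 - eta the two sections together weigh
  at most eta times the word. Recursing k levels encodes O(w), for |w| <= n, by a word of
  length O(2^k + eta^k n) over a 7-letter alphabet; 2^k ~ n^alpha balances the two terms.
\<close>

lemma cubic_root_bounds:
  fixes t :: real
  assumes "t ^ 3 + t ^ 2 + t = 2"
  shows "0 < t" "t < 1"
proof -
  show "0 < t"
  proof (rule ccontr)
    assume "\<not> 0 < t"
    have "0 \<le> (t + 1/2) ^ 2" by simp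
    then have "0 \<le> t ^ 2 + t + 1" by (simp add: power2_eq_square algebra_simps)
    with \<open>\<not> 0 < t\<close> have "t * (t ^ 2 + t + 1) \<le> 0" by (simp add: mult_nonpos_nonneg)
    with assms show False by (simp add: power2_eq_square power3_eq_cube algebra_simps)
  qed
  show "t < 1"
  proof (rule ccontr)
    assume "\<not> t < 1"
    then have "1 \<le> t ^ 3" "1 \<le> t ^ 2" by (simp_all add: one_le_power)
    then show False using assms \<open>\<not> t < 1\<close> by linarith
  qed
qed

lemma cubic_strict_mono:
  fixes x y :: real
  assumes "0 < x" "x < y"
  shows "x ^ 3 + x ^ 2 + x < y ^ 3 + y ^ 2 + y"
  using assms by (intro add_strict_mono power_strict_mono) auto

lemma
  shows eta_cubic: "eta ^ 3 + eta ^ 2 + eta = 2"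
    and eta_pos: "0 < eta"
    and eta_less_1: "eta < 1"
proof -
  obtain x :: real where x: "x ^ 3 + x ^ 2 + x - 2 = 0"
    using IVT[of "\<lambda>t::real. t ^ 3 + t ^ 2 + t - 2" 0 0 1] by (auto intro!: continuous_intros)
  have "eta = x"
    unfolding eta_def
  proof (rule the_equality)
    fix t :: real
    assume "t ^ 3 + t ^ 2 + t - 2 = 0"
    then show "t = x"
      using x cubic_root_bounds cubic_strict_mono by (smt (verit))
  qed (fact x)
  then show "eta ^ 3 + eta ^ 2 + eta = 2" "0 < eta" "eta < 1"
    using x cubic_root_bounds[of x] by simp_all
qed

lemma eta_power_bounds: "0 < eta ^ 3" "eta ^ 3 < eta ^ 2" "eta ^ 2 < eta"
  using eta_pos eta_less_1 power_strict_decreasing[of 2 3 eta] power_strict_decreasing[of 1 2 eta]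
  by simp_all

lemma eta_fourth_power: "eta ^ 4 = 2 * eta - eta ^ 3 - eta ^ 2"
proof -
  have "eta ^ 4 = eta * (eta ^ 3 + eta ^ 2 + eta) - eta ^ 3 - eta ^ 2"
    by (simp add: algebra_simps power_numeral_reduce)
  then show ?thesis by (simp add: eta_cubic)
qed

type_synonym seq = "nat \<Rightarrow> bool"

lemma seq_eq_case_nat: "u = case_nat (u 0) (\<lambda>j. u (Suc j))"
  by (rule ext) (simp split: nat.split)

lemma rho_eq_case_nat: "rho = case_nat True rho"
  by (rule ext) (simp add: rho_def split: nat.split)

lemma act_word_Nil [simp]: "act_word u [] = u"
  and act_word_Cons [simp]: "act_word u (g # w) = act_word (gact g u) w"
  and act_word_append: "act_word u (v @ w) = act_word (act_word u v) w"
  by (simp_all add: act_word_def)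

lemma gact_GA_GA [simp]: "gact GA (gact GA u) = u"
proof
  show "gact GA (gact GA u) k = u k" for k by (cases k) simp_all
qed

lemma gact_rho: "g \<noteq> GA \<Longrightarrow> gact g rho = rho"
proof -
  have "gact GB rho k \<and> gact GC rho k \<and> gact GD rho k" for k
    by (induction k) (simp_all add: rho_def)
  then show "g \<noteq> GA \<Longrightarrow> gact g rho = rho"
    by (cases g) (auto simp: rho_def)
qed

fun gen_section :: "bool \<Rightarrow> gen \<Rightarrow> gen list" where
  "gen_section c GA = []"
| "gen_section c GB = (if c then [GC] else [GA])"
| "gen_section c GC = (if c then [GD] else [GA])"
| "gen_section c GD = (if c then [GB] else [])"

fun word_section :: "bool \<Rightarrow> gen list \<Rightarrow> gen list" where
  "word_section c [] = []"
| "word_section c (g # w) = gen_section c g @ word_section (if g = GA then \<not> c else c) w"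

definition count_a :: "gen list \<Rightarrow> nat" where
  "count_a w = length (filter (\<lambda>g. g = GA) w)"

lemma count_a_Nil [simp]: "count_a [] = 0"
  and count_a_Cons [simp]: "count_a (g # w) = (if g = GA then Suc (count_a w) else count_a w)"
  and count_a_append [simp]: "count_a (v @ w) = count_a v + count_a w"
  by (simp_all add: count_a_def)

lemma gact_case_nat:
  "gact g (case_nat c u) = case_nat (if g = GA then \<not> c else c) (act_word u (gen_section c g))"
proof
  show "gact g (case_nat c u) k =
      case_nat (if g = GA then \<not> c else c) (act_word u (gen_section c g)) k" for k
    by (cases k; cases g) simp_all
qed

lemma act_word_case_nat:
  "act_word (case_nat c u) w = case_nat (c = even (count_a w)) (act_word u (word_section c w))"
proof (induction w arbitrary: c u)
  case (Cons g w)
  have "act_word (case_nat c u) (g # w) =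
      act_word (case_nat (if g = GA then \<not> c else c) (act_word u (gen_section c g))) w"
    by (simp add: gact_case_nat)
  then show ?case
    by (cases "g = GA") (auto simp: Cons.IH act_word_append split: nat.split)
qed simp

lemma word_section_append:
  "word_section c (v @ w) = word_section c v @ word_section (c = even (count_a v)) w"
proof (induction v arbitrary: c)
  case (Cons g v)
  have "(if g = GA then \<not> c else c) = even (count_a v) \<longleftrightarrow> c = even (count_a (g # v))"
    by auto
  then show ?case by (simp add: Cons.IH)
qed simp

datatype klein = K1 | Kb | Kc | Kd

fun klein_word :: "klein \<Rightarrow> gen list" where
  "klein_word K1 = []"
| "klein_word Kb = [GB]"
| "klein_word Kc = [GC]"
| "klein_word Kd = [GD]"

fun klein_mult :: "klein \<Rightarrow> klein \<Rightarrow> klein" where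
  "klein_mult K1 y = y"
| "klein_mult x K1 = x"
| "klein_mult Kb Kb = K1" | "klein_mult Kb Kc = Kd" | "klein_mult Kb Kd = Kc"
| "klein_mult Kc Kb = Kd" | "klein_mult Kc Kc = K1" | "klein_mult Kc Kd = Kb"
| "klein_mult Kd Kb = Kc" | "klein_mult Kd Kc = Kb" | "klein_mult Kd Kd = K1"

fun klein_sec1 :: "klein \<Rightarrow> klein" where
  "klein_sec1 K1 = K1" | "klein_sec1 Kb = Kc" | "klein_sec1 Kc = Kd" | "klein_sec1 Kd = Kb"

lemma klein_sec1_mult: "klein_sec1 (klein_mult x y) = klein_mult (klein_sec1 x) (klein_sec1 y)"
  by (cases x; cases y) simp_all

lemma count_a_klein_word [simp]: "count_a (klein_word x) = 0"
  by (cases x) simp_all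

lemma word_section_True_klein_word: "word_section True (klein_word x) = klein_word (klein_sec1 x)"
  by (cases x) simp_all

lemma act_word_klein_mult:
  "act_word u (klein_word (klein_mult x y)) = act_word u (klein_word x @ klein_word y)"
proof
  show "act_word u (klein_word (klein_mult x y)) k = act_word u (klein_word x @ klein_word y) k"
    for k
  proof (induction k arbitrary: x y u)
    case 0
    show ?case by (cases x; cases y) simp_all
  next
    case (Suc k)
    obtain c t where u: "u = case_nat c t"
      using seq_eq_case_nat by blast
    show ?case
    proof (cases c)
      case True
      then show ?thesis
        using Suc.IH[where x = "klein_sec1 x" and y = "klein_sec1 y" and u = t]
        by (simp add: u act_word_case_nat word_section_append word_section_True_klein_word
            klein_sec1_mult)
    next
      case False
      then show ?thesis by (cases x; cases y) (simp_all add: u act_word_case_nat)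
    qed
  qed
qed

fun klein_of :: "gen \<Rightarrow> klein" where
  "klein_of GA = K1" | "klein_of GB = Kb" | "klein_of GC = Kc" | "klein_of GD = Kd"

text \<open>syllables w = (v0, [v1, ..., vm]) for w = v0 a v1 a ... a vm; the value klein_of GA is
  never used.\<close>

fun syllables :: "gen list \<Rightarrow> klein \<times> klein list" where
  "syllables [] = (K1, [])"
| "syllables (GA # w) = (K1, fst (syllables w) # snd (syllables w))"
| "syllables (g # w) = (klein_mult (klein_of g) (fst (syllables w)), snd (syllables w))"

fun syl_word :: "klein list \<Rightarrow> gen list" where
  "syl_word [] = []"
| "syl_word (x # s) = GA # klein_word x @ syl_word s"

lemma count_a_syl_word [simp]: "count_a (syl_word s) = length s"
  by (induction s) simp_all

lemma act_word_syllables: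
  "act_word u w = act_word u (klein_word (fst (syllables w)) @ syl_word (snd (syllables w)))"
proof (induction w arbitrary: u)
  case (Cons g w)
  show ?case
  proof (cases "g = GA")
    case False
    then have "klein_word (klein_of g) = [g]" by (cases g) simp_all
    with False show ?thesis
      using Cons.IH by (cases g) (simp_all add: act_word_append act_word_klein_mult)
  qed (simp add: Cons.IH)
qed simp

lemma orbit_set_Nil: "orbit_set [] = {rho}"
  by (simp add: orbit_set_def)

lemma orbit_set_Cons: "orbit_set (g # w) = insert (act_word rho (g # w)) (orbit_set w)"
proof -
  have "orbit_set w = (\<lambda>i. act_word rho (drop i w)) ` {..length w}" for w
    by (auto simp: orbit_set_def)
  then show ?thesis by (simp add: atMost_Suc_eq_insert_0 image_image)
qed

lemma act_word_in_orbit_set: "act_word rho w \<in> orbit_set w"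
  unfolding orbit_set_def by force

lemma orbit_set_Cons_non_a: "g \<noteq> GA \<Longrightarrow> orbit_set (g # w) = orbit_set w"
  using act_word_in_orbit_set[of w] by (simp add: orbit_set_Cons gact_rho insert_absorb)

lemma orbit_set_klein_prefix: "orbit_set (klein_word x @ w) = orbit_set w"
  by (cases x) (simp_all add: orbit_set_Cons_non_a)

lemma orbit_set_syllables: "orbit_set w = orbit_set (syl_word (snd (syllables w)))"
proof (induction w)
  case Nil
  then show ?case by simp
next
  case (Cons g w)
  show ?case
  proof (cases "g = GA")
    case True
    have "act_word rho (GA # w) = act_word rho (syl_word (snd (syllables (GA # w))))"
      by (simp add: act_word_syllables[of _ w])
    with True Cons.IH show ?thesis
      by (simp add: orbit_set_Cons orbit_set_klein_prefix del: act_word_Cons)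
  next
    case False
    with Cons.IH show ?thesis by (cases g) (simp_all add: orbit_set_Cons_non_a)
  qed
qed

text \<open>For x \<noteq> 1 the two sections of a syllable a x weigh exactly eta times as much as the syllable
  (syllable_contraction); this is what fixes eta.\<close>

fun gen_weight :: "gen \<Rightarrow> real" where
  "gen_weight GA = 1 - eta ^ 3"
| "gen_weight GB = eta ^ 3"
| "gen_weight GC = 1 - eta ^ 2"
| "gen_weight GD = 1 - eta"

fun word_weight :: "gen list \<Rightarrow> real" where
  "word_weight [] = 0"
| "word_weight (g # w) = gen_weight g + word_weight w"

lemma gen_weight_pos: "0 < gen_weight g"
  and gen_weight_le_1: "gen_weight g \<le> 1"
  using eta_less_1 eta_power_bounds by (cases g; simp only: gen_weight.simps; linarith)+

lemma word_weight_append [simp]: "word_weight (v @ w) = word_weight v + word_weight w"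
  by (induction v) simp_all

lemma word_weight_nonneg: "0 \<le> word_weight w"
  by (induction w) (simp_all add: add_nonneg_nonneg less_imp_le[OF gen_weight_pos])

lemma word_weight_le_length: "word_weight w \<le> length w"
  by (induction w) (simp_all add: add_mono gen_weight_le_1)

lemma word_weight_klein_mult:
  "word_weight (klein_word (klein_mult x y))
     \<le> word_weight (klein_word x) + word_weight (klein_word y)"
  using eta_cubic eta_less_1 eta_power_bounds
  by (cases x; cases y;
      simp only: klein_mult.simps klein_word.simps word_weight.simps gen_weight.simps; linarith)

lemma word_weight_syllables:
  "word_weight (klein_word (fst (syllables w))) + word_weight (syl_word (snd (syllables w)))
     \<le> word_weight w"
proof (induction w)
  case (Cons g w)
  then show ?case
    using word_weight_klein_mult[of "klein_of g" "fst (syllables w)"]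
    by (cases g) simp_all
qed simp

lemma length_le_syl_weight: "gen_weight GA * length s \<le> word_weight (syl_word s)"
proof (induction s)
  case (Cons x s)
  then show ?case
    using word_weight_nonneg[of "klein_word x"] by (simp add: algebra_simps)
qed simp

lemma syllable_contraction:
  "word_weight (word_section True (GA # klein_word x))
     + word_weight (word_section False (GA # klein_word x))
     \<le> eta * word_weight (GA # klein_word x)"
  using eta_cubic eta_less_1 eta_fourth_power eta_power_bounds
  by (cases x) (simp_all add: algebra_simps power_numeral_reduce)

lemma section_contraction:
  "word_weight (word_section True (syl_word s)) + word_weight (word_section False (syl_word s))
     \<le> eta * word_weight (syl_word s)"
proof (induction s)
  case (Cons x s)
  have "syl_word (x # s) = (GA # klein_word x) @ syl_word s" by simp
  then show ?case
    using Cons.IH syllable_contraction[of x]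
    by (simp only: word_section_append word_weight_append) (simp add: algebra_simps)
qed simp

definition syl_section :: "bool \<Rightarrow> klein list \<Rightarrow> klein list" where
  "syl_section c s = snd (syllables (word_section c (syl_word s)))"

lemma syl_section_contraction:
  "word_weight (syl_word (syl_section True s)) + word_weight (syl_word (syl_section False s))
     \<le> eta * word_weight (syl_word s)"
proof -
  have "word_weight (syl_word (syl_section c s)) \<le> word_weight (word_section c (syl_word s))" for c
    using word_weight_syllables[of "word_section c (syl_word s)"]
      word_weight_nonneg[of "klein_word (fst (syllables (word_section c (syl_word s))))"]
    unfolding syl_section_def by linarith
  from this[of True] this[of False] show ?thesis
    using section_contraction[of s] by linarith
qed

text \<open>half_orbit c s consists of the tails of the orbit points rho \<cdot> syl_word (drop j s),
  j < length s, with j even (c = True) or odd (c = False).\<close>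

fun half_orbit :: "bool \<Rightarrow> klein list \<Rightarrow> seq set" where
  "half_orbit c [] = {}"
| "half_orbit c (x # s) =
    (if c then insert (act_word rho (word_section True (syl_word (x # s)))) else id)
      (half_orbit (\<not> c) s)"

lemma orbit_set_word_section:
  "orbit_set (word_section c (syl_word s)) = insert rho (half_orbit c s)"
proof (induction s arbitrary: c)
  case Nil
  then show ?case by (simp add: orbit_set_Nil)
next
  case (Cons x s)
  show ?case
  proof (cases c)
    case True
    have "act_word rho (word_section False (syl_word s)) \<in> insert rho (half_orbit False s)"
      using act_word_in_orbit_set Cons.IH[of False] by blast
    with True show ?thesis
      using Cons.IH[of False]
      by (cases x) (auto simp: orbit_set_Cons simp del: act_word_Cons)
  next
    case False
    then show ?thesis
      using Cons.IH[of True]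
      by (simp add: word_section_append word_section_True_klein_word orbit_set_klein_prefix)
  qed
qed

lemma orbit_set_syl_word:
  "orbit_set (syl_word s) =
     insert rho (case_nat (even (length s)) ` half_orbit True s
       \<union> case_nat (odd (length s)) ` half_orbit False s)"
proof (induction s)
  case Nil
  then show ?case by (simp add: orbit_set_Nil)
next
  case (Cons x s)
  have "act_word rho (syl_word (x # s)) =
      case_nat (odd (length s)) (act_word rho (word_section True (syl_word (x # s))))"
    by (subst rho_eq_case_nat) (simp only: act_word_case_nat count_a_syl_word, simp)
  moreover have "orbit_set (syl_word (x # s)) =
      insert (act_word rho (syl_word (x # s))) (orbit_set (syl_word s))"
    by (simp only: syl_word.simps orbit_set_Cons orbit_set_klein_prefix)
  ultimately show ?case
    using Cons.IH by auto
qed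

lemma orbit_set_syl_section:
  "orbit_set (syl_word (syl_section c s)) = insert rho (half_orbit c s)"
  by (simp add: syl_section_def orbit_set_word_section flip: orbit_set_syllables)

datatype code_sym = Letter klein | Stop | Bit bool

fun orbit_code :: "nat \<Rightarrow> klein list \<Rightarrow> code_sym list" where
  "orbit_code 0 s = map Letter s @ [Stop]"
| "orbit_code (Suc k) s =
    [Bit (even (length s)), Bit (rho \<in> half_orbit True s), Bit (rho \<in> half_orbit False s)]
    @ orbit_code k (syl_section True s) @ orbit_code k (syl_section False s)"

lemma half_orbit_eqI:
  assumes "orbit_set (syl_word (syl_section c s)) = orbit_set (syl_word (syl_section c t))"
    and "rho \<in> half_orbit c s \<longleftrightarrow> rho \<in> half_orbit c t"
  shows "half_orbit c s = half_orbit c t"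
  using assms by (simp add: orbit_set_syl_section) (metis insert_absorb insert_ident)

lemma orbit_code_append_eqD:
  "orbit_code k s @ r = orbit_code k t @ r' \<Longrightarrow>
     orbit_set (syl_word s) = orbit_set (syl_word t) \<and> r = r'"
proof (induction k arbitrary: s t r r')
  case 0
  then have "s = t \<and> r = r'"
    by (induction s arbitrary: t) (auto simp: Cons_eq_append_conv)
  then show ?case by simp
next
  case (Suc k)
  from Suc.prems have bits:
      "even (length s) \<longleftrightarrow> even (length t)"
      "rho \<in> half_orbit True s \<longleftrightarrow> rho \<in> half_orbit True t"
      "rho \<in> half_orbit False s \<longleftrightarrow> rho \<in> half_orbit False t"
    and codes: "orbit_code k (syl_section True s) @ orbit_code k (syl_section False s) @ r =
      orbit_code k (syl_section True t) @ orbit_code k (syl_section False t) @ r'"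
    by simp_all
  from Suc.IH[OF codes] obtain rest:
      "orbit_code k (syl_section False s) @ r = orbit_code k (syl_section False t) @ r'"
    and "half_orbit True s = half_orbit True t"
    using half_orbit_eqI[OF _ bits(2)] by blast
  moreover from Suc.IH[OF rest] have "half_orbit False s = half_orbit False t" "r = r'"
    using half_orbit_eqI[OF _ bits(3)] by blast+
  ultimately show ?case
    using bits(1) by (simp add: orbit_set_syl_word)
qed

lemma length_orbit_code:
  "real (length (orbit_code k s))
     \<le> 4 * 2 ^ k - 3 + eta ^ k * word_weight (syl_word s) / gen_weight GA"
proof (induction k arbitrary: s)
  case 0
  show ?case
    using length_le_syl_weight[of s] gen_weight_pos[of GA] by (simp add: field_simps)
next
  case (Suc k)
  let ?w = "\<lambda>c. word_weight (syl_word (syl_section c s))"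
  have "real (length (orbit_code (Suc k) s))
      = 3 + real (length (orbit_code k (syl_section True s)))
          + real (length (orbit_code k (syl_section False s)))"
    by simp
  also have "\<dots> \<le> 4 * 2 ^ Suc k - 3 + eta ^ k * (?w True + ?w False) / gen_weight GA"
    using Suc.IH[of "syl_section True s"] Suc.IH[of "syl_section False s"]
    by (simp add: add_divide_distrib distrib_left)
  also have "\<dots> \<le> 4 * 2 ^ Suc k - 3 + eta ^ k * (eta * word_weight (syl_word s)) / gen_weight GA"
    using syl_section_contraction[of s] eta_pos gen_weight_pos[of GA]
    by (intro add_left_mono divide_right_mono mult_left_mono) simp_all
  finally show ?case by (simp add: ac_simps)
qed

lemma card_image_le_by_codes:
  fixes code :: "'a \<Rightarrow> 'b list"
  assumes fin: "finite (UNIV :: 'b set)"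
    and len: "\<And>x. x \<in> A \<Longrightarrow> length (code x) \<le> N"
    and det: "\<And>x y. x \<in> A \<Longrightarrow> y \<in> A \<Longrightarrow> code x = code y \<Longrightarrow> f x = f y"
  shows "card (f ` A) \<le> (\<Sum>i\<le>N. card (UNIV :: 'b set) ^ i)"
proof -
  define decode where "decode c = f (SOME x. x \<in> A \<and> code x = c)" for c
  have "decode (code x) = f x" if "x \<in> A" for x
    unfolding decode_def using that by (metis (mono_tags, lifting) det someI)
  then have "f ` A = decode ` code ` A"
    by (simp add: image_image)
  have codes: "code ` A \<subseteq> {xs. set xs \<subseteq> UNIV \<and> length xs \<le> N}"
    using len by auto
  have "card (f ` A) \<le> card (code ` A)"
    unfolding \<open>f ` A = decode ` code ` A\<close>
    by (rule card_image_le[OF finite_subset[OF codes finite_lists_length_le[OF fin]]])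
  also have "\<dots> \<le> (\<Sum>i\<le>N. card (UNIV :: 'b set) ^ i)"
    using card_mono[OF finite_lists_length_le[OF fin] codes] card_lists_length_le[OF fin] by simp
  finally show ?thesis .
qed

lemma UNIV_code_sym:
  "(UNIV :: code_sym set) = {Letter K1, Letter Kb, Letter Kc, Letter Kd, Stop, Bit True, Bit False}"
proof -
  have "x \<in> {Letter K1, Letter Kb, Letter Kc, Letter Kd, Stop, Bit True, Bit False}" for x
  proof (cases x)
    case (Letter y)
    then show ?thesis by (cases y) auto
  qed auto
  then show ?thesis by blast
qed

lemma Sigma_count_le_depth:
  "real (Sigma_count n) \<le> 7 powr (4 * 2 ^ k + eta ^ k * n / gen_weight GA + 1)"
proof -
  define X where "X = 4 * 2 ^ k + eta ^ k * n / gen_weight GA"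
  define N where "N = nat \<lfloor>X\<rfloor>"
  have len: "length (orbit_code k (snd (syllables w))) \<le> N" if "length w \<le> n" for w
  proof -
    have "word_weight (syl_word (snd (syllables w))) \<le> n"
      using word_weight_syllables[of w] word_weight_le_length[of w] that
        word_weight_nonneg[of "klein_word (fst (syllables w))"] by linarith
    then have "eta ^ k * word_weight (syl_word (snd (syllables w))) / gen_weight GA
        \<le> eta ^ k * n / gen_weight GA"
      using eta_pos gen_weight_pos[of GA] by (intro divide_right_mono mult_left_mono) simp_all
    then have "real (length (orbit_code k (snd (syllables w)))) \<le> X"
      using length_orbit_code[of k "snd (syllables w)"] unfolding X_def by linarith
    then show ?thesis unfolding N_def by (rule le_nat_floor)
  qed
  have det: "orbit_set v = orbit_set w"
    if "orbit_code k (snd (syllables v)) = orbit_code k (snd (syllables w))" for v w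
    using orbit_code_append_eqD[of k "snd (syllables v)" "[]" "snd (syllables w)" "[]"] that
    by (simp flip: orbit_set_syllables)
  have UNIV: "finite (UNIV :: code_sym set)" "card (UNIV :: code_sym set) = 7"
    by (simp_all add: UNIV_code_sym)
  have "Sigma_count n = card (orbit_set ` {w. length w \<le> n})"
    unfolding Sigma_count_def by (intro arg_cong[where f = card]) blast
  also have "\<dots> \<le> (\<Sum>i\<le>N. card (UNIV :: code_sym set) ^ i)"
    using len det by (intro card_image_le_by_codes[OF UNIV(1)]) blast+
  also have "\<dots> \<le> 7 ^ Suc N"
    unfolding UNIV(2)
    by (induction N) simp_all
  finally have "real (Sigma_count n) \<le> real (7 ^ Suc N)"
    by (simp only: of_nat_le_iff)
  also have "\<dots> = 7 powr real (Suc N)"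
    by (simp only: of_nat_power powr_realpow) simp
  also have "\<dots> \<le> 7 powr (X + 1)"
    using gen_weight_pos[of GA] eta_pos unfolding N_def X_def by (intro powr_mono) simp_all
  finally show ?thesis unfolding X_def .
qed

lemma exists_balancing_depth:
  fixes q x :: real
  assumes "0 < q" "q < 1" "1 \<le> x"
  defines "\<beta> \<equiv> ln 2 / ln (2 / q)"
  shows "\<exists>k::nat. 2 ^ k \<le> x powr \<beta> \<and> q ^ k * x \<le> x powr \<beta> / q"
proof -
  define L where "L = \<beta> * log 2 x"
  have ln_2q: "ln q = ln 2 - ln (2 / q)" "0 < ln (2 / q)"
    using assms(1,2) by (simp_all add: ln_div)
  have "0 \<le> L"
    unfolding L_def \<beta>_def using assms(3) ln_2q(2) by simp
  define k where "k = nat \<lfloor>L\<rfloor>"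
  have k: "real k \<le> L" "L - 1 \<le> real k"
    unfolding k_def using \<open>0 \<le> L\<close> by linarith+
  have "(2::real) ^ k = 2 powr real k"
    by (simp add: powr_realpow)
  also have "\<dots> \<le> 2 powr L"
    using k(1) by simp
  also have "\<dots> = (2 powr log 2 x) powr \<beta>"
    unfolding L_def by (simp add: powr_powr mult.commute)
  also have "\<dots> = x powr \<beta>"
    using assms(3) by simp
  finally have "2 ^ k \<le> x powr \<beta>" .
  have "q ^ k = q powr real k"
    using assms(1) by (simp add: powr_realpow)
  also have "\<dots> \<le> q powr (L - 1)"
    using k(2) assms(1,2) by (intro powr_mono') simp_all
  also have "\<dots> = q powr L / q"
    using assms(1) by (simp add: powr_diff)
  also have "q powr L = x powr (\<beta> - 1)"
  proof -
    have "L * ln q = (\<beta> - 1) * ln x"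
      unfolding L_def \<beta>_def log_def using ln_2q(2) by (simp add: field_simps ln_2q(1))
    then show ?thesis
      using assms(1,3) by (simp add: powr_def)
  qed
  finally have "q ^ k * x \<le> x powr (\<beta> - 1) / q * x"
    using assms(3) by (intro mult_right_mono) simp_all
  also have "\<dots> = x powr \<beta> / q"
    using assms(3) by (simp add: powr_diff)
  finally show ?thesis
    using \<open>2 ^ k \<le> x powr \<beta>\<close> by blast
qed

lemma alpha_pos: "0 < alpha"
  unfolding alpha_def using eta_pos eta_less_1 by (simp add: ln_div)

lemma Sigma_count_le_exp:
  assumes "1 \<le> n"
  shows "real (Sigma_count n) \<le> exp (ln 7 * (5 + 1 / (eta * gen_weight GA)) * n powr alpha)"
proof -
  obtain k where k: "2 ^ k \<le> n powr alpha" "eta ^ k * n \<le> n powr alpha / eta"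
    using exists_balancing_depth[of eta n] eta_pos eta_less_1 assms unfolding alpha_def by auto
  have "1 \<le> n powr alpha"
    using assms alpha_pos by (simp add: ge_one_powr_ge_zero)
  moreover have "eta ^ k * n / gen_weight GA \<le> n powr alpha / eta / gen_weight GA"
    using k(2) gen_weight_pos[of GA] by (intro divide_right_mono) simp_all
  ultimately have "4 * 2 ^ k + eta ^ k * n / gen_weight GA + 1
      \<le> (5 + 1 / (eta * gen_weight GA)) * n powr alpha"
    using k(1) by (simp add: algebra_simps divide_divide_eq_left)
  then have "7 powr (4 * 2 ^ k + eta ^ k * n / gen_weight GA + 1)
      \<le> 7 powr ((5 + 1 / (eta * gen_weight GA)) * n powr alpha)"
    by simp
  also have "\<dots> = exp (ln 7 * (5 + 1 / (eta * gen_weight GA)) * n powr alpha)"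
    by (simp add: powr_def[of "7::real"] ac_simps)
  finally show ?thesis
    using Sigma_count_le_depth[of n k] by linarith
qed

theorem lemma4p9:
  shows "\<exists>C::real. C > 0 \<and>
           (\<forall>\<^sub>F n in sequentially. real (Sigma_count n) \<le> exp ((C * real n) powr alpha))"
proof -
  define K where "K = ln 7 * (5 + 1 / (eta * gen_weight GA))"
  have "0 < K"
    unfolding K_def using eta_pos gen_weight_pos[of GA] by (simp add: add_pos_pos)
  define C where "C = K powr (1 / alpha)"
  have "(C * real n) powr alpha = K * real n powr alpha" for n
    unfolding C_def using \<open>0 < K\<close> alpha_pos by (simp add: powr_mult powr_powr)
  then have "\<forall>\<^sub>F n in sequentially. real (Sigma_count n) \<le> exp ((C * real n) powr alpha)"
    using Sigma_count_le_exp unfolding K_def by (intro eventually_sequentiallyI[of 1]) simp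
  moreover have "0 < C"
    unfolding C_def using \<open>0 < K\<close> by simp
  ultimately show ?thesis by blast
qed

end
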